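(* For the anonymous MIS algorithm described in the context, let $\gamma\xrightarrow{t}\gamma'$ be a transition in which $t$ consists either only of Candidacy moves, or only of Withdrawal? moves all performed by nodes of a single connected candidate set of $\gamma$. If $\mathcal{X}$ is an alive connected candidate set of $\gamma$, then either $\mathcal{X}$ vanishes in this transition, or there exists an alive connected candidate set $\mathcal{X}'$ of $\gamma'$ with $\mathcal{X}'\subseteq\mathcal{X}$.
   Context: $G=(V,E)$ is a finite simple undirected graph; $N(u)$ is the open neighbourhood of $u$. A configuration assigns to each node $u$ a value $s_u\in\{\bot,\top\}$ (written $s_u^\gamma$ in configuration $\gamma$). A rule "guard $\to$ command" is enabled on $u$ in $\gamma$ if its guard holds there. A transition $\gamma\xrightarrow{t}\gamma'$ is given by a nonempty set $t$ of moves $(u,r)$ with $r$ enabled on $u$ in $\gamma$, at most one per node, all executed simultaneously from the values in $\gamma$; other nodes keep their values. The algorithm has the rules: (Candidacy) $s_u=\bot\wedge\forall v\in N(u),\ s_v=\bot\ \to\ s_u:=\top$. (Withdrawal?) $s_u=\top\wedge\exists v\in N(u),\ s_v=\top\ \to$ with probability $\frac12$ set $s_u:=\bot$, otherwise leave it unchanged. $\beta(\gamma)=\{u\in V: s_u^\gamma=\top\text{ and }\forall v\in N(u),\ s_v^\gamma=\bot\}$. A set $\mathcal{X}\subseteq V$ is a candidate set of $\gamma$ if every $u\in\mathcal{X}$ has $s_u^\gamma=\top$ and every $v\in N(u)$ with $s_v^\gamma=\top$ belongs to $\mathcal{X}$; it is a connected candidate set if moreover it induces a connected subgraph of $G$.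 A candidate set $\mathcal{X}$ of $\gamma$ is alive in $\gamma$ if Withdrawal? is enabled on at least one node of $\mathcal{X}$ (for connected candidate sets this is equivalent to $|\mathcal{X}|\ge 2$). In a transition $\gamma\to\gamma'$, an alive candidate set $\mathcal{X}$ of $\gamma$ vanishes if every $u\in\mathcal{X}$ satisfies $s_u^{\gamma'}=\bot$ or $u\in\beta(\gamma')$. *)

theory Defs
  imports Main
begin

text \<open>A finite simple undirected graph: vertex set V, adjacency E (symmetric, irreflexive, within V).
  A configuration is s :: 'a \<Rightarrow> bool, with True meaning top and False meaning bottom.\<close>

definition simple_graph :: "'a set \<Rightarrow> ('a \<Rightarrow> 'a \<Rightarrow> bool) \<Rightarrow> bool" where
  "simple_graph V E \<longleftrightarrow> finite V \<and> (\<forall>u v. E u v \<longrightarrow> u \<in> V \<and> v \<in> V)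
     \<and> (\<forall>u v. E u v \<longrightarrow> E v u) \<and> (\<forall>u. \<not> E u u)"

definition nbh :: "'a set \<Rightarrow> ('a \<Rightarrow> 'a \<Rightarrow> bool) \<Rightarrow> 'a \<Rightarrow> 'a set" where
  "nbh V E u = {v \<in> V. E u v}"

datatype rule = Candidacy | Withdrawal

definition cand_guard :: "'a set \<Rightarrow> ('a \<Rightarrow> 'a \<Rightarrow> bool) \<Rightarrow> ('a \<Rightarrow> bool) \<Rightarrow> 'a \<Rightarrow> bool" where
  "cand_guard V E s u \<longleftrightarrow> \<not> s u \<and> (\<forall>v \<in> nbh V E u. \<not> s v)"

definition withdraw_guard :: "'a set \<Rightarrow> ('a \<Rightarrow> 'a \<Rightarrow> bool) \<Rightarrow> ('a \<Rightarrow> bool) \<Rightarrow> 'a \<Rightarrow> bool" where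
  "withdraw_guard V E s u \<longleftrightarrow> s u \<and> (\<exists>v \<in> nbh V E u. s v)"

fun enabled :: "'a set \<Rightarrow> ('a \<Rightarrow> 'a \<Rightarrow> bool) \<Rightarrow> ('a \<Rightarrow> bool) \<Rightarrow> 'a \<Rightarrow> rule \<Rightarrow> bool" where
  "enabled V E s u Candidacy = cand_guard V E s u"
| "enabled V E s u Withdrawal = withdraw_guard V E s u"

text \<open>Candidacy sets the node to top; Withdrawal sets it to bottom or leaves it unchanged
  (the two possible outcomes of the coin flip); all other nodes keep their values.\<close>
definition transition :: "'a set \<Rightarrow> ('a \<Rightarrow> 'a \<Rightarrow> bool) \<Rightarrow> ('a \<Rightarrow> bool) \<Rightarrow> ('a \<times> rule) set \<Rightarrow> ('a \<Rightarrow> bool) \<Rightarrow> bool" where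
  "transition V E s t s' \<longleftrightarrow>
     t \<noteq> {} \<and>
     (\<forall>(u, r) \<in> t. u \<in> V \<and> enabled V E s u r) \<and>
     (\<forall>u r1 r2. (u, r1) \<in> t \<and> (u, r2) \<in> t \<longrightarrow> r1 = r2) \<and>
     (\<forall>u. ((u, Candidacy) \<in> t \<longrightarrow> s' u = True) \<and>
          ((u, Withdrawal) \<in> t \<longrightarrow> (s' u = False \<or> s' u = s u)) \<and>
          ((\<forall>r. (u, r) \<notin> t) \<longrightarrow> s' u = s u))"

definition beta :: "'a set \<Rightarrow> ('a \<Rightarrow> 'a \<Rightarrow> bool) \<Rightarrow> ('a \<Rightarrow> bool) \<Rightarrow> 'a set" where
  "beta V E s = {u \<in> V. s u \<and> (\<forall>v \<in> nbh V E u. \<not> s v)}"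

definition candidate_set :: "'a set \<Rightarrow> ('a \<Rightarrow> 'a \<Rightarrow> bool) \<Rightarrow> ('a \<Rightarrow> bool) \<Rightarrow> 'a set \<Rightarrow> bool" where
  "candidate_set V E s X \<longleftrightarrow> X \<subseteq> V \<and>
     (\<forall>u \<in> X. s u \<and> (\<forall>v \<in> nbh V E u. s v \<longrightarrow> v \<in> X))"

definition induces_connected :: "('a \<Rightarrow> 'a \<Rightarrow> bool) \<Rightarrow> 'a set \<Rightarrow> bool" where
  "induces_connected E X \<longleftrightarrow> X \<noteq> {} \<and>
     (\<forall>u \<in> X. \<forall>v \<in> X. (\<lambda>a b. a \<in> X \<and> b \<in> X \<and> E a b)\<^sup>*\<^sup>* u v)"

definition connected_candidate_set :: "'a set \<Rightarrow> ('a \<Rightarrow> 'a \<Rightarrow> bool) \<Rightarrow> ('a \<Rightarrow> bool) \<Rightarrow> 'a set \<Rightarrow> bool" where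
  "connected_candidate_set V E s X \<longleftrightarrow> candidate_set V E s X \<and> induces_connected E X"

definition alive :: "'a set \<Rightarrow> ('a \<Rightarrow> 'a \<Rightarrow> bool) \<Rightarrow> ('a \<Rightarrow> bool) \<Rightarrow> 'a set \<Rightarrow> bool" where
  "alive V E s X \<longleftrightarrow> candidate_set V E s X \<and> (\<exists>u \<in> X. withdraw_guard V E s u)"

definition vanishes :: "'a set \<Rightarrow> ('a \<Rightarrow> 'a \<Rightarrow> bool) \<Rightarrow> ('a \<Rightarrow> bool) \<Rightarrow> 'a set \<Rightarrow> bool" where
  "vanishes V E s' X \<longleftrightarrow> (\<forall>u \<in> X. \<not> s' u \<or> u \<in> beta V E s')"

end

theory Submission
  imports Defs
begin

text \<open>A node that is \<open>\<bottom>\<close> can become \<open>\<top>\<close> only by Candidacy, whose guard requires all its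
  neighbours to be \<open>\<bottom>\<close>. So a \<open>\<top>\<close> node of \<open>\<gamma>'\<close> adjacent to a node of the candidate set \<open>\<X>\<close>
  was already \<open>\<top>\<close> in \<open>\<gamma>\<close> and hence lies in \<open>\<X>\<close>. Consequently every connected component of the
  nodes of \<open>\<X>\<close> that stay \<open>\<top>\<close> is a connected candidate set of \<open>\<gamma>'\<close>. If \<open>\<X>\<close> does not vanish,
  some node of \<open>\<X>\<close> stays \<open>\<top>\<close> next to a \<open>\<top>\<close> neighbour, so its component is alive.\<close>

lemma transition_becomes_top_Candidacy:
  assumes "transition V E s t s'" "s' v" "\<not> s v"
  shows "cand_guard V E s v"
proof -
  obtain r where r: "(v, r) \<in> t"
    using assms unfolding transition_def by metis
  with assms(1) have "enabled V E s v r"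
    unfolding transition_def by blast
  with assms(3) show ?thesis
    by (cases r) (auto simp: withdraw_guard_def)
qed

lemma transition_no_new_top_neighbour:
  assumes "simple_graph V E" "transition V E s t s'"
    and "s w" "v \<in> nbh V E w" "s' v"
  shows "s v"
proof (rule ccontr)
  assume "\<not> s v"
  with assms(2,5) have "cand_guard V E s v"
    by (intro transition_becomes_top_Candidacy)
  moreover have "w \<in> nbh V E v"
    using assms(1,4) unfolding simple_graph_def nbh_def by blast
  ultimately show False
    using assms(3) unfolding cand_guard_def by blast
qed

definition component :: "('a \<Rightarrow> 'a \<Rightarrow> bool) \<Rightarrow> 'a set \<Rightarrow> 'a \<Rightarrow> 'a set" where
  "component E Z u = {w. (\<lambda>a b. a \<in> Z \<and> b \<in> Z \<and> E a b)\<^sup>*\<^sup>* u w}"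

lemma self_in_component: "u \<in> component E Z u"
  by (simp add: component_def)

lemma component_subset:
  assumes "u \<in> Z"
  shows "component E Z u \<subseteq> Z"
proof
  fix w assume "w \<in> component E Z u"
  then have "(\<lambda>a b. a \<in> Z \<and> b \<in> Z \<and> E a b)\<^sup>*\<^sup>* u w"
    by (simp add: component_def)
  then show "w \<in> Z"
    using assms by (induction rule: rtranclp_induct) auto
qed

lemma component_closed:
  assumes "w \<in> component E Z u" "w \<in> Z" "y \<in> Z" "E w y"
  shows "y \<in> component E Z u"
  using assms unfolding component_def by (simp add: rtranclp.rtrancl_into_rtrancl)

lemma induces_connected_component:
  assumes "symp E" "u \<in> Z"
  shows "induces_connected E (component E Z u)"
  unfolding induces_connected_def
proof (intro conjI ballI)
  let ?C = "component E Z u"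
  let ?R = "\<lambda>a b. a \<in> Z \<and> b \<in> Z \<and> E a b"
  show "?C \<noteq> {}"
    using self_in_component[of u E Z] by blast
  have path_in_component: "(\<lambda>x y. x \<in> ?C \<and> y \<in> ?C \<and> E x y)\<^sup>*\<^sup>* a b"
    if "?R\<^sup>*\<^sup>* a b" "a \<in> ?C" for a b
    using that
  proof (induction rule: rtranclp_induct)
    case (step y z)
    have "y \<in> ?C"
      using step.prems step.hyps(1) unfolding component_def by (blast intro: rtranclp_trans)
    moreover have "z \<in> ?C"
      using calculation step.hyps(2) component_closed by metis
    ultimately show ?case
      using step by (simp add: rtranclp.rtrancl_into_rtrancl)
  qed simp
  fix a b assume a: "a \<in> ?C" and b: "b \<in> ?C"
  have "symp ?R"
    using assms(1) by (auto simp: symp_def)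
  then have "?R\<^sup>*\<^sup>* a u"
    using a unfolding component_def by (blast dest: symp_rtranclp sympD)
  then have "?R\<^sup>*\<^sup>* a b"
    using b unfolding component_def by (blast intro: rtranclp_trans)
  then show "(\<lambda>x y. x \<in> ?C \<and> y \<in> ?C \<and> E x y)\<^sup>*\<^sup>* a b"
    using a by (rule path_in_component)
qed

lemma surviving_component_candidate_set:
  assumes G: "simple_graph V E" and tr: "transition V E s t s'"
    and X: "candidate_set V E s X" and u: "u \<in> X" "s' u"
  shows "candidate_set V E s' (component E {w \<in> X. s' w} u)"
  unfolding candidate_set_def
proof (intro conjI ballI allI impI)
  let ?Z = "{w \<in> X. s' w}"
  have sub: "component E ?Z u \<subseteq> ?Z"
    by (rule component_subset) (simp add: u)
  moreover have "X \<subseteq> V"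
    using X unfolding candidate_set_def by blast
  ultimately show "component E ?Z u \<subseteq> V"
    by blast
  show "s' w" if "w \<in> component E ?Z u" for w
    using that sub by blast
  fix w y assume w: "w \<in> component E ?Z u" and y: "y \<in> nbh V E w" and "s' y"
  have "w \<in> X"
    using w sub by blast
  moreover have "\<forall>x \<in> X. s x \<and> (\<forall>z \<in> nbh V E x. s z \<longrightarrow> z \<in> X)"
    using X unfolding candidate_set_def by (rule conjunct2)
  ultimately have "s w \<and> (\<forall>z \<in> nbh V E w. s z \<longrightarrow> z \<in> X)"
    by blast
  with y have "s w" and closed: "s y \<Longrightarrow> y \<in> X"
    by blast+
  have "s y"
    using G tr \<open>s w\<close> y \<open>s' y\<close> by (rule transition_no_new_top_neighbour)
  then have "y \<in> ?Z"
    using closed \<open>s' y\<close> by simp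
  moreover have "w \<in> ?Z" "E w y"
    using w sub y unfolding nbh_def by auto
  ultimately show "y \<in> component E ?Z u"
    using w by (blast intro: component_closed)
qed

theorem mainTheorem17:
  fixes V :: "'a set" and E :: "'a \<Rightarrow> 'a \<Rightarrow> bool"
    and s s' :: "'a \<Rightarrow> bool" and t :: "('a \<times> rule) set" and X :: "'a set"
  assumes G: "simple_graph V E"
    and tr: "transition V E s t s'"
    and moves: "(\<forall>(u, r) \<in> t. r = Candidacy) \<or>
       (\<exists>Y. connected_candidate_set V E s Y \<and> (\<forall>(u, r) \<in> t. r = Withdrawal \<and> u \<in> Y))"
    and X: "connected_candidate_set V E s X" "alive V E s X"
  shows "vanishes V E s' X \<or>
    (\<exists>X'. X' \<subseteq> X \<and> connected_candidate_set V E s' X' \<and> alive V E s' X')"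
proof (cases "vanishes V E s' X")
  case False
  have "X \<subseteq> V"
    using X(1) by (simp add: connected_candidate_set_def candidate_set_def)
  obtain u where u: "u \<in> X" "s' u" and "u \<notin> beta V E s'"
    using False unfolding vanishes_def by blast
  with \<open>X \<subseteq> V\<close> obtain v where v: "v \<in> nbh V E u" "s' v"
    unfolding beta_def by blast
  let ?X' = "component E {w \<in> X. s' w} u"
  have "candidate_set V E s X"
    using X(1) by (simp add: connected_candidate_set_def)
  with G tr have cand: "candidate_set V E s' ?X'"
    using u by (rule surviving_component_candidate_set)
  have "symp E"
    using G unfolding simple_graph_def by (simp add: sympI)
  then have conn: "induces_connected E ?X'"
    by (rule induces_connected_component) (simp add: u)
  have "withdraw_guard V E s' u"
    using u v unfolding withdraw_guard_def by blast
  with cand have alive: "alive V E s' ?X'"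
    unfolding alive_def by (blast intro: self_in_component)
  have sub: "?X' \<subseteq> X"
    using component_subset[of u "{w \<in> X. s' w}" E] u by blast
  show ?thesis
    using cand conn alive sub unfolding connected_candidate_set_def by blast
qed simp

end
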